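(* Let $N=\mathbb R^2\setminus\{0\}$ with the Lorentz metric $\dfrac{du\odot dv}{u^2+v^2}$, and let $d:N\to M$ be its complexification as described in the context. Then every null geodesic of $N$ is complete in the sense defined in the context.
   Context: $N=\mathbb R^2\setminus\{0\}$ with coordinates $(u,v)$ and the Lorentz metric $\frac{du\odot dv}{u^2+v^2}$ (here $du\odot dv$ denotes the symmetric product). Its complexification is $M=\mathbb C^2\setminus\big((1,i)\mathbb C\cup(1,-i)\mathbb C\big)$ with the holomorphic metric given by the same formula $\frac{du\odot dv}{u^2+v^2}$, and $d:N\to M$ the inclusion. (A holomorphic metric on a complex manifold is an everywhere nondegenerate symmetric holomorphic section of the bundle of twice covariant holomorphic tensors; it has a Levi-Civita connection and holomorphic geodesics.) Analytic continuation / Riemann surface: for a holomorphic map element $f:\mathcal U\to M$ on a region $\mathcal U\subset\mathbb C$, an analytic continuation is a quadruple $(S,\pi,j,G)$ with $S$ a connected Riemann surface, $\pi:S\to\mathbb C$ nonconstant holomorphic, $\mathcal U\subset\pi(S)$, $j:\mathcal U\to S$ a holomorphic immersion with $\pi\circ j=\mathrm{id}$, $G:S\to M$ holomorphic with $G\circ j=f$; the Riemann surface of $f$ is the unique maximal such continuation. Completeness: a real-analytic curve $\gamma$ in a real-analytic manifold $N$ with complexification $d:N\to M$ is called complete if the Riemann surface $(S,\pi,j,G)$ of (the holomorphic extension of) $d\circ\gamma$ satisfies that $\mathbb R\setminus\pi\big(G^{-1}(d(N))\big)$ is a discrete set. A geodesic is null if its velocity $(\dot u,\dot v)$ satisfies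 $\dot u\dot v=0$. *)

theory Defs
  imports "HOL-Analysis.Analysis"
begin

definition coord :: "nat \<Rightarrow> real \<times> real \<Rightarrow> real" where
  "coord i p = (if i = 0 then fst p else snd p)"

definition unitv :: "nat \<Rightarrow> real \<times> real" where
  "unitv i = (if i = 0 then (1, 0) else (0, 1))"

definition N_set :: "(real \<times> real) set" where
  "N_set = UNIV - {(0, 0)}"

text \<open>Components g_ij of the metric du.dv/(u^2+v^2), with the symmetric product
  du.dv = (du (x) dv + dv (x) du)/2 (a different normalisation only rescales the metric by a
  constant and does not change geodesics).\<close>

definition gN :: "nat \<Rightarrow> nat \<Rightarrow> real \<times> real \<Rightarrow> real" where
  "gN i j p = (if i \<noteq> j then 1 / (2 * ((fst p)\<^sup>2 + (snd p)\<^sup>2)) else 0)"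

definition inv_metric :: "(nat \<Rightarrow> nat \<Rightarrow> real \<times> real \<Rightarrow> real) \<Rightarrow> nat \<Rightarrow> nat \<Rightarrow> real \<times> real \<Rightarrow> real" where
  "inv_metric g i j p =
     (let a = g 0 0 p; b = g 0 1 p; c = g 1 1 p; det = a * c - b * g 1 0 p in
      if i = 0 \<and> j = 0 then c / det
      else if i = 1 \<and> j = 1 then a / det
      else if i = 0 then - b / det else - g 1 0 p / det)"

definition pd :: "nat \<Rightarrow> (real \<times> real \<Rightarrow> real) \<Rightarrow> real \<times> real \<Rightarrow> real" where
  "pd i h p = deriv (\<lambda>s. h (p + s *\<^sub>R unitv i)) 0"

definition christoffel :: "(nat \<Rightarrow> nat \<Rightarrow> real \<times> real \<Rightarrow> real) \<Rightarrow> nat \<Rightarrow> nat \<Rightarrow> nat \<Rightarrow> real \<times> real \<Rightarrow> real" where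
  "christoffel g k i j p =
     (\<Sum>l<2. inv_metric g k l p * (pd i (g j l) p + pd j (g i l) p - pd l (g i j) p)) / 2"

definition is_geodesic :: "real set \<Rightarrow> (real \<Rightarrow> real \<times> real) \<Rightarrow> bool" where
  "is_geodesic I \<gamma> \<longleftrightarrow> is_interval I \<and> open I \<and> I \<noteq> {} \<and> \<gamma> ` I \<subseteq> N_set \<and>
     (\<exists>\<gamma>' \<gamma>''. \<forall>t\<in>I. (\<gamma> has_vector_derivative \<gamma>' t) (at t) \<and>
        (\<gamma>' has_vector_derivative \<gamma>'' t) (at t) \<and>
        (\<forall>k<2. coord k (\<gamma>'' t) +
           (\<Sum>i<2. \<Sum>j<2. christoffel gN k i j (\<gamma> t) * coord i (\<gamma>' t) * coord j (\<gamma>' t)) = 0))"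

definition is_null_geodesic :: "real set \<Rightarrow> (real \<Rightarrow> real \<times> real) \<Rightarrow> bool" where
  "is_null_geodesic I \<gamma> \<longleftrightarrow> is_geodesic I \<gamma> \<and>
     (\<forall>t\<in>I. fst (vector_derivative \<gamma> (at t)) * snd (vector_derivative \<gamma> (at t)) = 0)"

text \<open>M = C^2 minus the lines (1,i)C and (1,-i)C, i.e. the set where u^2 + v^2 \<noteq> 0.\<close>

definition M_set :: "(complex \<times> complex) set" where
  "M_set = {p. \<not> (\<exists>c. p = (c, \<i> * c) \<or> p = (c, - \<i> * c))}"

definition dmap :: "real \<times> real \<Rightarrow> complex \<times> complex" where
  "dmap p = (complex_of_real (fst p), complex_of_real (snd p))"

definition holo2 :: "(complex \<Rightarrow> complex \<times> complex) \<Rightarrow> complex set \<Rightarrow> bool" where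
  "holo2 F S \<longleftrightarrow> (\<lambda>z. fst (F z)) holomorphic_on S \<and> (\<lambda>z. snd (F z)) holomorphic_on S"

text \<open>The points of the Riemann surface of f are exactly the end elements of such continuations.\<close>

definition cont_along ::
  "(complex \<Rightarrow> complex \<times> complex) \<Rightarrow> complex set \<Rightarrow> (real \<Rightarrow> complex)
     \<Rightarrow> (real \<Rightarrow> complex \<Rightarrow> complex \<times> complex) \<Rightarrow> (real \<Rightarrow> real) \<Rightarrow> bool" where
  "cont_along f U \<sigma> g r \<longleftrightarrow> path \<sigma> \<and> \<sigma> 0 \<in> U \<and>
     (\<forall>t\<in>{0..1}. r t > 0 \<and> holo2 (g t) (ball (\<sigma> t) (r t)) \<and> g t ` ball (\<sigma> t) (r t) \<subseteq> M_set) \<and>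
     (\<forall>t\<in>{0..1}. \<exists>\<delta>>0. \<forall>s\<in>{0..1}. \<bar>s - t\<bar> < \<delta> \<longrightarrow>
        \<sigma> s \<in> ball (\<sigma> t) (r t) \<and>
        (\<forall>z \<in> ball (\<sigma> s) (r s) \<inter> ball (\<sigma> t) (r t). g s z = g t z)) \<and>
     (\<exists>e>0. ball (\<sigma> 0) e \<subseteq> U \<and> (\<forall>z \<in> ball (\<sigma> 0) e \<inter> ball (\<sigma> 0) (r 0). g 0 z = f z))"

text \<open>pi(G^{-1}(d(N))) for the Riemann surface (S,pi,j,G) of f : real points x over which
  some point of S is mapped by G into d(N).\<close>

definition real_points_over_dN :: "(complex \<Rightarrow> complex \<times> complex) \<Rightarrow> complex set \<Rightarrow> real set" where
  "real_points_over_dN f U =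
     {x. \<exists>\<sigma> g r. cont_along f U \<sigma> g r \<and> \<sigma> 1 = complex_of_real x \<and> g 1 (\<sigma> 1) \<in> dmap ` N_set}"

definition hol_extension ::
  "real set \<Rightarrow> (real \<Rightarrow> real \<times> real) \<Rightarrow> complex set \<Rightarrow> (complex \<Rightarrow> complex \<times> complex) \<Rightarrow> bool" where
  "hol_extension I \<gamma> U f \<longleftrightarrow> open U \<and> connected U \<and> complex_of_real ` I \<subseteq> U \<and>
     holo2 f U \<and> f ` U \<subseteq> M_set \<and> (\<forall>t\<in>I. f (complex_of_real t) = dmap (\<gamma> t))"

definition complete_curve :: "real set \<Rightarrow> (real \<Rightarrow> real \<times> real) \<Rightarrow> bool" where
  "complete_curve I \<gamma> \<longleftrightarrow> (\<exists>U f. hol_extension I \<gamma> U f) \<and>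
     (\<forall>U f. hol_extension I \<gamma> U f \<longrightarrow> discrete (UNIV - real_points_over_dN f U))"

end

theory Submission
  imports Defs "HOL-Complex_Analysis.Conformal_Mappings"
begin

text \<open>The only nonvanishing Christoffel symbols of the metric are
  \<open>\<Gamma>\<^sup>u\<^sub>u\<^sub>u = -2u/(u\<^sup>2+v\<^sup>2)\<close> and \<open>\<Gamma>\<^sup>v\<^sub>v\<^sub>v = -2v/(u\<^sup>2+v\<^sup>2)\<close>.
  Along a null geodesic \<open>u' v' = 0\<close>, which makes \<open>u'/(u\<^sup>2+v\<^sup>2)\<close> and \<open>v'/(u\<^sup>2+v\<^sup>2)\<close> constant;
  their product vanishes, so one coordinate is a constant \<open>c\<close> and the other solves the Riccati
  equation \<open>p' = a (p\<^sup>2 + c\<^sup>2)\<close>. Its solutions \<open>c tan (a c t + \<beta>)\<close> and \<open>1 / (\<beta> - a t)\<close>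
  are meromorphic on \<open>\<complex>\<close> with only real poles, so \<open>d \<circ> \<gamma>\<close> extends holomorphically, with values
  in \<open>M\<close>, to every non-real point and to all real points off a discrete set. By the identity
  theorem any holomorphic extension of \<open>d \<circ> \<gamma>\<close> agrees with this one near the curve, and continuing
  it through the upper half-plane reaches every real point off the poles with a value in \<open>d(N)\<close>.\<close>

section \<open>Null geodesics of \<open>N\<close>\<close>

definition sq_radius :: "real \<times> real \<Rightarrow> real" where
  "sq_radius p = fst p ^ 2 + snd p ^ 2"

lemma pd_gN:
  assumes "sq_radius p \<noteq> 0"
  shows "pd k (gN i j) p = (if i = j then 0 else - coord k p / sq_radius p ^ 2)"
proof (cases "i = j")
  case True
  then show ?thesis by (simp add: pd_def gN_def)
next
  case False
  have radius:
    "((\<lambda>s. 2 * sq_radius (p + s *\<^sub>R unitv k)) has_real_derivative 4 * coord k p) (at 0)"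
    by (auto intro!: derivative_eq_intros simp: sq_radius_def unitv_def coord_def)
  have "((\<lambda>s. inverse (2 * sq_radius (p + s *\<^sub>R unitv k))) has_real_derivative
      - coord k p / sq_radius p ^ 2) (at 0)"
    by (rule DERIV_cong[OF DERIV_inverse_fun[OF radius]])
      (use assms in \<open>simp_all add: field_simps power2_eq_square\<close>)
  moreover have "gN i j = (\<lambda>q. inverse (2 * sq_radius q))"
    using False by (simp add: gN_def sq_radius_def inverse_eq_divide fun_eq_iff)
  ultimately show ?thesis
    using False by (simp add: pd_def DERIV_imp_deriv)
qed

lemma gN_christoffel_contraction:
  assumes "sq_radius p \<noteq> 0" "k < 2"
  shows "(\<Sum>i<2. \<Sum>j<2. christoffel gN k i j p * coord i w * coord j w)
    = - 2 * coord k p * coord k w ^ 2 / sq_radius p"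
proof -
  have inv: "inv_metric gN k l p = (if k = l then 0 else 2 * sq_radius p)" if "k < 2" "l < 2" for k l
    using that assms
    by (auto simp: inv_metric_def gN_def Let_def sq_radius_def less_Suc_eq numeral_2_eq_2)
  show ?thesis
    using assms
    by (auto simp: christoffel_def inv pd_gN numeral_2_eq_2 lessThan_Suc less_Suc_eq
       power2_eq_square coord_def)
qed

lemma has_vector_derivative_coord:
  assumes "(\<gamma> has_vector_derivative w) (at t)"
  shows "((\<lambda>t. coord k (\<gamma> t)) has_real_derivative coord k w) (at t)"
proof -
  have d: "(\<gamma> has_derivative (\<lambda>h. h *\<^sub>R w)) (at t)"
    using assms by (simp add: has_vector_derivative_def)
  show ?thesis
    using has_derivative_fst[OF d] has_derivative_snd[OF d]
    by (cases "k = 0") (simp_all add: coord_def has_field_derivative_def mult_commute_abs)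
qed

lemma geodesic_sq_radius_nonzero:
  assumes "is_geodesic I \<gamma>" "t \<in> I"
  shows "sq_radius (\<gamma> t) \<noteq> 0"
  using assms by (cases "\<gamma> t") (auto simp: is_geodesic_def N_set_def sq_radius_def)

lemma null_geodesic_equations:
  assumes "is_null_geodesic I \<gamma>"
  obtains \<gamma>' \<gamma>'' where
    "\<And>t. t \<in> I \<Longrightarrow> (\<gamma> has_vector_derivative \<gamma>' t) (at t)"
    "\<And>t. t \<in> I \<Longrightarrow> (\<gamma>' has_vector_derivative \<gamma>'' t) (at t)"
    "\<And>t k. t \<in> I \<Longrightarrow> k < 2 \<Longrightarrow>
       coord k (\<gamma>'' t) * sq_radius (\<gamma> t) = 2 * coord k (\<gamma> t) * coord k (\<gamma>' t) ^ 2"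
    "\<And>t. t \<in> I \<Longrightarrow> fst (\<gamma>' t) * snd (\<gamma>' t) = 0"
proof -
  obtain \<gamma>' \<gamma>'' where
    d1: "\<And>t. t \<in> I \<Longrightarrow> (\<gamma> has_vector_derivative \<gamma>' t) (at t)" and
    d2: "\<And>t. t \<in> I \<Longrightarrow> (\<gamma>' has_vector_derivative \<gamma>'' t) (at t)" and
    eq: "\<And>t k. t \<in> I \<Longrightarrow> k < 2 \<Longrightarrow> coord k (\<gamma>'' t) +
           (\<Sum>i<2. \<Sum>j<2. christoffel gN k i j (\<gamma> t) * coord i (\<gamma>' t) * coord j (\<gamma>' t)) = 0"
    using assms unfolding is_null_geodesic_def is_geodesic_def by blast
  have nz: "sq_radius (\<gamma> t) \<noteq> 0" if "t \<in> I" for t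
    using assms geodesic_sq_radius_nonzero[OF _ that] unfolding is_null_geodesic_def by blast
  show thesis
  proof (rule that[OF d1 d2])
    fix t and k :: nat assume "t \<in> I" "k < 2"
    then have "coord k (\<gamma>'' t) - 2 * coord k (\<gamma> t) * coord k (\<gamma>' t) ^ 2 / sq_radius (\<gamma> t) = 0"
      using eq gN_christoffel_contraction[OF nz] by simp
    with nz[OF \<open>t \<in> I\<close>]
    show "coord k (\<gamma>'' t) * sq_radius (\<gamma> t) = 2 * coord k (\<gamma> t) * coord k (\<gamma>' t) ^ 2"
      by (simp add: field_simps)
  next
    fix t assume "t \<in> I"
    then have "vector_derivative \<gamma> (at t) = \<gamma>' t"
      using d1 by (simp add: vector_derivative_at)
    with \<open>t \<in> I\<close> assms show "fst (\<gamma>' t) * snd (\<gamma>' t) = 0"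
      unfolding is_null_geodesic_def by metis
  qed
qed

lemma null_geodesic_first_integral:
  assumes "convex I"
    and d1: "\<And>t. t \<in> I \<Longrightarrow> (\<gamma> has_vector_derivative \<gamma>' t) (at t)"
    and d2: "\<And>t. t \<in> I \<Longrightarrow> (\<gamma>' has_vector_derivative \<gamma>'' t) (at t)"
    and eq: "\<And>t. t \<in> I \<Longrightarrow>
       coord k (\<gamma>'' t) * sq_radius (\<gamma> t) = 2 * coord k (\<gamma> t) * coord k (\<gamma>' t) ^ 2"
    and null: "\<And>t. t \<in> I \<Longrightarrow> fst (\<gamma>' t) * snd (\<gamma>' t) = 0"
    and nz: "\<And>t. t \<in> I \<Longrightarrow> sq_radius (\<gamma> t) \<noteq> 0"
  obtains a where "\<And>t. t \<in> I \<Longrightarrow> coord k (\<gamma>' t) = a * sq_radius (\<gamma> t)"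
proof -
  have "((\<lambda>t. coord k (\<gamma>' t) / sq_radius (\<gamma> t)) has_real_derivative 0) (at t within I)"
    if t: "t \<in> I" for t
  proof -
    have radius: "((\<lambda>t. sq_radius (\<gamma> t)) has_real_derivative
        2 * fst (\<gamma> t) * fst (\<gamma>' t) + 2 * snd (\<gamma> t) * snd (\<gamma>' t)) (at t)"
      using has_vector_derivative_coord[OF d1[OF t], of 0]
        has_vector_derivative_coord[OF d1[OF t], of 1]
      unfolding sq_radius_def coord_def by (auto intro!: derivative_eq_intros)
    have numerator: "coord k (\<gamma>'' t) * sq_radius (\<gamma> t)
        - coord k (\<gamma>' t) * (2 * fst (\<gamma> t) * fst (\<gamma>' t) + 2 * snd (\<gamma> t) * snd (\<gamma>' t)) = 0"
      using eq[OF t] null[OF t] unfolding coord_def sq_radius_def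
      by (cases "k = 0") (auto simp: power2_eq_square algebra_simps)
    from DERIV_divide[OF has_vector_derivative_coord[OF d2[OF t], of k] radius nz[OF t]]
    show ?thesis
      unfolding numerator by (simp add: has_field_derivative_at_within)
  qed
  from has_field_derivative_zero_constant[OF \<open>convex I\<close> this]
  obtain a where "\<And>t. t \<in> I \<Longrightarrow> coord k (\<gamma>' t) / sq_radius (\<gamma> t) = a"
    by blast
  with nz show thesis
    by (intro that[of a]) (simp add: field_simps)
qed

lemma null_geodesic_first_integrals:
  assumes "is_null_geodesic I \<gamma>"
  obtains \<gamma>' a b where
    "\<And>t. t \<in> I \<Longrightarrow> (\<gamma> has_vector_derivative \<gamma>' t) (at t)"
    "\<And>t. t \<in> I \<Longrightarrow> fst (\<gamma>' t) = a * sq_radius (\<gamma> t)"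
    "\<And>t. t \<in> I \<Longrightarrow> snd (\<gamma>' t) = b * sq_radius (\<gamma> t)"
    "a = 0 \<or> b = 0"
proof -
  obtain \<gamma>' \<gamma>'' where
    d1: "\<And>t. t \<in> I \<Longrightarrow> (\<gamma> has_vector_derivative \<gamma>' t) (at t)" and
    d2: "\<And>t. t \<in> I \<Longrightarrow> (\<gamma>' has_vector_derivative \<gamma>'' t) (at t)" and
    eq: "\<And>t k. t \<in> I \<Longrightarrow> k < 2 \<Longrightarrow>
       coord k (\<gamma>'' t) * sq_radius (\<gamma> t) = 2 * coord k (\<gamma> t) * coord k (\<gamma>' t) ^ 2" and
    null: "\<And>t. t \<in> I \<Longrightarrow> fst (\<gamma>' t) * snd (\<gamma>' t) = 0"
    using null_geodesic_equations[OF assms] by blast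
  have "convex I" "I \<noteq> {}"
    using assms by (auto simp: is_null_geodesic_def is_geodesic_def is_interval_convex)
  have nz: "\<And>t. t \<in> I \<Longrightarrow> sq_radius (\<gamma> t) \<noteq> 0"
    using assms geodesic_sq_radius_nonzero unfolding is_null_geodesic_def by blast
  obtain a where a: "\<And>t. t \<in> I \<Longrightarrow> coord 0 (\<gamma>' t) = a * sq_radius (\<gamma> t)"
    by (rule null_geodesic_first_integral[where k = 0, OF \<open>convex I\<close> d1 d2 _ null nz])
      (auto simp: eq)
  obtain b where b: "\<And>t. t \<in> I \<Longrightarrow> coord 1 (\<gamma>' t) = b * sq_radius (\<gamma> t)"
    by (rule null_geodesic_first_integral[where k = 1, OF \<open>convex I\<close> d1 d2 _ null nz])
      (auto simp: eq)
  obtain t where "t \<in> I"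
    using \<open>I \<noteq> {}\<close> by blast
  then have "a * b * sq_radius (\<gamma> t) ^ 2 = fst (\<gamma>' t) * snd (\<gamma>' t)"
    using a b by (simp add: coord_def power2_eq_square)
  with null[OF \<open>t \<in> I\<close>] nz[OF \<open>t \<in> I\<close>] have "a = 0 \<or> b = 0"
    by auto
  with d1 a b show thesis
    by (intro that[of \<gamma>' a b]) (simp_all add: coord_def)
qed

lemma null_geodesic_riccati:
  assumes "is_null_geodesic I \<gamma>"
  obtains p a c where
    "\<And>t. t \<in> I \<Longrightarrow> (p has_real_derivative a * (p t ^ 2 + c ^ 2)) (at t)"
    "\<And>t. t \<in> I \<Longrightarrow> p t ^ 2 + c ^ 2 \<noteq> 0"
    "(\<forall>t\<in>I. \<gamma> t = (p t, c)) \<or> (\<forall>t\<in>I. \<gamma> t = (c, p t))"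
proof -
  obtain \<gamma>' a b where
    d1: "\<And>t. t \<in> I \<Longrightarrow> (\<gamma> has_vector_derivative \<gamma>' t) (at t)" and
    a: "\<And>t. t \<in> I \<Longrightarrow> fst (\<gamma>' t) = a * sq_radius (\<gamma> t)" and
    b: "\<And>t. t \<in> I \<Longrightarrow> snd (\<gamma>' t) = b * sq_radius (\<gamma> t)" and
    "a = 0 \<or> b = 0"
    using null_geodesic_first_integrals[OF assms] by blast
  have "convex I"
    using assms by (simp add: is_null_geodesic_def is_geodesic_def is_interval_convex)
  have nz: "\<And>t. t \<in> I \<Longrightarrow> sq_radius (\<gamma> t) \<noteq> 0"
    using assms geodesic_sq_radius_nonzero unfolding is_null_geodesic_def by blast
  have coord_constant: "\<exists>c. \<forall>t\<in>I. coord k (\<gamma> t) = c"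
    if "\<And>t. t \<in> I \<Longrightarrow> coord k (\<gamma>' t) = 0" for k
  proof (rule has_field_derivative_zero_constant[OF \<open>convex I\<close>])
    fix t assume "t \<in> I"
    then show "((\<lambda>t. coord k (\<gamma> t)) has_real_derivative 0) (at t within I)"
      using has_vector_derivative_coord[OF d1[OF \<open>t \<in> I\<close>], of k] that
      by (simp add: has_field_derivative_at_within)
  qed
  from \<open>a = 0 \<or> b = 0\<close> show thesis
  proof
    assume "b = 0"
    then obtain c where c: "\<forall>t\<in>I. snd (\<gamma> t) = c"
      using coord_constant[of 1] b by (auto simp: coord_def)
    show thesis
    proof (rule that[of "\<lambda>t. fst (\<gamma> t)" a c])
      fix t assume "t \<in> I"
      then show "((\<lambda>t. fst (\<gamma> t)) has_real_derivative a * (fst (\<gamma> t) ^ 2 + c ^ 2)) (at t)"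
        using has_vector_derivative_coord[OF d1, of t 0] a c by (simp add: coord_def sq_radius_def)
      show "fst (\<gamma> t) ^ 2 + c ^ 2 \<noteq> 0"
        using nz \<open>t \<in> I\<close> c by (simp add: sq_radius_def)
    qed (use c in \<open>simp add: prod_eq_iff\<close>)
  next
    assume "a = 0"
    then obtain c where c: "\<forall>t\<in>I. fst (\<gamma> t) = c"
      using coord_constant[of 0] a by (auto simp: coord_def)
    show thesis
    proof (rule that[of "\<lambda>t. snd (\<gamma> t)" b c])
      fix t assume "t \<in> I"
      then show "((\<lambda>t. snd (\<gamma> t)) has_real_derivative b * (snd (\<gamma> t) ^ 2 + c ^ 2)) (at t)"
        using has_vector_derivative_coord[OF d1, of t 1] b c
        by (simp add: coord_def sq_radius_def add.commute)
      show "snd (\<gamma> t) ^ 2 + c ^ 2 \<noteq> 0"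
        using nz \<open>t \<in> I\<close> c by (simp add: sq_radius_def add.commute)
    qed (use c in \<open>simp add: prod_eq_iff\<close>)
  qed
qed

section \<open>Continuation in the complexification\<close>

lemma mem_M_set_iff: "(x, y) \<in> M_set \<longleftrightarrow> x\<^sup>2 + y\<^sup>2 \<noteq> 0"
proof -
  have "x\<^sup>2 + y\<^sup>2 = (y - \<i> * x) * (y + \<i> * x)"
    by (simp add: algebra_simps power2_eq_square)
  then have "x\<^sup>2 + y\<^sup>2 = 0 \<longleftrightarrow> y = \<i> * x \<or> y = - \<i> * x"
    by (auto simp: add_eq_0_iff2)
  then show ?thesis
    unfolding M_set_def by auto
qed

lemma M_set_real_point_in_dN:
  assumes "z \<in> M_set" "z \<in> range dmap"
  shows "z \<in> dmap ` N_set"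
proof -
  obtain q where q: "z = dmap q" using assms(2) by blast
  with assms(1) have "q \<noteq> (0, 0)"
    by (auto simp: dmap_def mem_M_set_iff)
  then show ?thesis
    using q by (simp add: N_set_def)
qed

lemma holomorphic_eventually_eq_real_interval:
  assumes "f holomorphic_on S" "g holomorphic_on S" "open S" "complex_of_real t0 \<in> S"
    and "open I" "t0 \<in> I" "\<And>t. t \<in> I \<Longrightarrow> f (complex_of_real t) = g (complex_of_real t)"
  shows "eventually (\<lambda>z. f z = g z) (nhds (complex_of_real t0))"
proof -
  obtain e where "e > 0" and e: "ball (complex_of_real t0) e \<subseteq> S"
    using assms(3,4) open_contains_ball by blast
  obtain d where "d > 0" and d: "ball t0 d \<subseteq> I"
    using assms(5,6) open_contains_ball by blast
  define B where "B = ball (complex_of_real t0) e"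
  define V where "V = complex_of_real ` ball t0 (min e d)"
  have "complex_of_real t0 islimpt V"
    unfolding islimpt_approachable
  proof (intro allI impI)
    fix \<epsilon> :: real assume "\<epsilon> > 0"
    define s where "s = t0 + min \<epsilon> (min e d) / 2"
    have "s \<noteq> t0" "dist s t0 < min e d" "dist s t0 < \<epsilon>"
      using \<open>\<epsilon> > 0\<close> \<open>e > 0\<close> \<open>d > 0\<close> by (auto simp: s_def dist_real_def)
    then show "\<exists>v\<in>V. v \<noteq> complex_of_real t0 \<and> dist v (complex_of_real t0) < \<epsilon>"
      unfolding V_def by (intro bexI[of _ "complex_of_real s"]) (auto simp: dist_commute)
  qed
  moreover have "V \<subseteq> B"
    by (auto simp: V_def B_def)
  moreover have "f v - g v = 0" if "v \<in> V" for v
    using that d assms(7) by (auto simp: V_def)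
  moreover have "(\<lambda>z. f z - g z) holomorphic_on B"
    using assms(1,2) e unfolding B_def by (auto intro: holomorphic_intros)
  moreover have "complex_of_real t0 \<in> B"
    using \<open>e > 0\<close> by (simp add: B_def)
  ultimately have "f z - g z = 0" if "z \<in> B" for z
    using analytic_continuation[of "\<lambda>z. f z - g z" B V "complex_of_real t0" z] that
    by (simp add: B_def)
  then show ?thesis
    unfolding eventually_nhds using \<open>complex_of_real t0 \<in> B\<close>
    by (intro exI[of _ B]) (simp add: B_def)
qed

lemma holo2_eventually_eq_real_interval:
  assumes "holo2 f S" "holo2 g S" "open S" "complex_of_real t0 \<in> S"
    and "open I" "t0 \<in> I" "\<And>t. t \<in> I \<Longrightarrow> f (complex_of_real t) = g (complex_of_real t)"
  shows "eventually (\<lambda>z. f z = g z) (nhds (complex_of_real t0))"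
proof -
  have "eventually (\<lambda>z. fst (f z) = fst (g z)) (nhds (complex_of_real t0))"
    using assms(1,2) unfolding holo2_def
    by (intro holomorphic_eventually_eq_real_interval[OF _ _ assms(3-6)]) (simp_all add: assms(7))
  moreover have "eventually (\<lambda>z. snd (f z) = snd (g z)) (nhds (complex_of_real t0))"
    using assms(1,2) unfolding holo2_def
    by (intro holomorphic_eventually_eq_real_interval[OF _ _ assms(3-6)]) (simp_all add: assms(7))
  ultimately show ?thesis
    by eventually_elim (simp add: prod_eq_iff)
qed

lemma cont_along_single_element:
  assumes "open D" "holo2 F D" "F ` D \<subseteq> M_set" "path \<sigma>" "path_image \<sigma> \<subseteq> D"
    and "open U" "\<sigma> 0 \<in> U" "eventually (\<lambda>z. F z = f z) (nhds (\<sigma> 0))"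
  shows "\<exists>r. cont_along f U \<sigma> (\<lambda>_. F) r"
proof -
  obtain \<epsilon> where "\<epsilon> > 0" and tube: "(\<Union>x\<in>path_image \<sigma>. ball x \<epsilon>) \<subseteq> D"
    by (rule compact_subset_open_imp_ball_epsilon_subset[OF compact_path_image assms(1,5)])
      (use assms(4) in simp)
  have local: "holo2 F (ball (\<sigma> s) \<epsilon>)" "F ` ball (\<sigma> s) \<epsilon> \<subseteq> M_set" if "s \<in> {0..1}" for s
  proof -
    have "ball (\<sigma> s) \<epsilon> \<subseteq> D"
      using tube that unfolding path_image_def by blast
    then show "holo2 F (ball (\<sigma> s) \<epsilon>)" "F ` ball (\<sigma> s) \<epsilon> \<subseteq> M_set"
      using assms(2,3) unfolding holo2_def by (auto intro: holomorphic_on_subset)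
  qed
  have steps: "\<exists>\<delta>>0. \<forall>s\<in>{0..1}. \<bar>s - t\<bar> < \<delta> \<longrightarrow> \<sigma> s \<in> ball (\<sigma> t) \<epsilon>" if "t \<in> {0..1}" for t
  proof -
    have "continuous_on {0..1} \<sigma>"
      using assms(4) by (simp add: path_def)
    from continuous_on_iff[THEN iffD1, OF this, rule_format, OF that \<open>\<epsilon> > 0\<close>]
    obtain \<delta> where "\<delta> > 0" and \<delta>: "\<forall>s\<in>{0..1}. dist s t < \<delta> \<longrightarrow> dist (\<sigma> s) (\<sigma> t) < \<epsilon>"
      by blast
    have "\<sigma> s \<in> ball (\<sigma> t) \<epsilon>" if "s \<in> {0..1}" "\<bar>s - t\<bar> < \<delta>" for s
      using \<delta> that by (simp add: dist_real_def dist_commute)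
    with \<open>\<delta> > 0\<close> show ?thesis
      by blast
  qed
  obtain d where "d > 0" and d: "\<And>z. dist z (\<sigma> 0) < d \<Longrightarrow> F z = f z"
    using assms(8) by (auto simp: eventually_nhds_metric)
  obtain e0 where "e0 > 0" and e0: "ball (\<sigma> 0) e0 \<subseteq> U"
    using assms(6,7) open_contains_ball by blast
  have start: "ball (\<sigma> 0) (min d e0) \<subseteq> U" "\<forall>z\<in>ball (\<sigma> 0) (min d e0). F z = f z"
    using e0 d by (auto simp: dist_commute)
  show ?thesis
    unfolding cont_along_def
  proof (intro exI[of _ "\<lambda>_. \<epsilon>"] conjI ballI)
    show "\<exists>e>0. ball (\<sigma> 0) e \<subseteq> U \<and> (\<forall>z\<in>ball (\<sigma> 0) e \<inter> ball (\<sigma> 0) \<epsilon>. F z = f z)"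
      using start \<open>d > 0\<close> \<open>e0 > 0\<close> by (intro exI[of _ "min d e0"]) auto
  qed (use assms(4,7) \<open>\<epsilon> > 0\<close> local steps in simp_all)
qed

lemma real_points_joinable_off_real_axis:
  obtains \<sigma> where "path \<sigma>" "\<sigma> 0 = complex_of_real a" "\<sigma> 1 = complex_of_real b"
    "path_image \<sigma> \<subseteq> {complex_of_real a, complex_of_real b} \<union> - \<real>"
proof
  let ?\<sigma> = "\<lambda>s. complex_of_real ((1 - s) * a + s * b) + \<i> * complex_of_real (s * (1 - s))"
  show "path ?\<sigma>"
    unfolding path_def by (auto intro!: continuous_intros)
  show "?\<sigma> 0 = complex_of_real a" "?\<sigma> 1 = complex_of_real b"
    by simp_all
  have "Im (?\<sigma> s) > 0" if "0 < s" "s < 1" for s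
    using that by simp
  then show "path_image ?\<sigma> \<subseteq> {complex_of_real a, complex_of_real b} \<union> - \<real>"
    unfolding path_image_def by (force simp: complex_is_Real_iff)
qed

lemma complete_curveI:
  assumes I: "is_interval I" "open I" "I \<noteq> {}"
    and D: "open D" "holo2 F D" "F ` D \<subseteq> M_set" "- \<real> \<subseteq> D" "complex_of_real ` I \<subseteq> D"
    and real: "\<And>x. complex_of_real x \<in> D \<Longrightarrow> F (complex_of_real x) \<in> range dmap"
    and poles: "discrete {x. complex_of_real x \<notin> D}"
    and F\<gamma>: "\<And>t. t \<in> I \<Longrightarrow> F (complex_of_real t) = dmap (\<gamma> t)"
  shows "complete_curve I \<gamma>"
  unfolding complete_curve_def
proof (intro conjI allI impI)
  have strip: "Re -` I \<subseteq> D"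
  proof
    fix z assume "z \<in> Re -` I"
    then show "z \<in> D"
      using D(4,5) of_real_Re[of z] by (cases "z \<in> \<real>") auto
  qed
  have "open (Re -` I)"
    using I(2) by (intro continuous_open_vimage) (auto intro: continuous_intros)
  moreover have "convex (Re -` I)"
    using bounded_linear.linear[OF bounded_linear_Re] is_interval_convex[OF I(1)]
    by (rule convex_linear_vimage)
  ultimately have "hol_extension I \<gamma> (Re -` I) F"
    using strip D(2,3) F\<gamma> unfolding hol_extension_def holo2_def
    by (auto intro: convex_connected holomorphic_on_subset)
  then show "\<exists>U f. hol_extension I \<gamma> U f"
    by blast
next
  fix U f assume ext: "hol_extension I \<gamma> U f"
  obtain t0 where "t0 \<in> I"
    using I(3) by blast
  then have t0: "complex_of_real t0 \<in> U \<inter> D"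
    using ext D(5) by (auto simp: hol_extension_def)
  have "open U"
    using ext by (simp add: hol_extension_def)
  have "holo2 F (U \<inter> D)" "holo2 f (U \<inter> D)"
    using ext D(2) unfolding hol_extension_def holo2_def by (auto intro: holomorphic_on_subset)
  moreover have "F (complex_of_real t) = f (complex_of_real t)" if "t \<in> I" for t
    using ext F\<gamma> that by (simp add: hol_extension_def)
  ultimately have agree: "eventually (\<lambda>z. F z = f z) (nhds (complex_of_real t0))"
    using \<open>open U\<close> D(1) t0 I(2) \<open>t0 \<in> I\<close>
    by (intro holo2_eventually_eq_real_interval[of F "U \<inter> D" f t0 I]) auto
  have "x \<in> real_points_over_dN f U" if x: "complex_of_real x \<in> D" for x
  proof -
    obtain \<sigma> where \<sigma>: "path \<sigma>" "\<sigma> 0 = complex_of_real t0" "\<sigma> 1 = complex_of_real x"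
      "path_image \<sigma> \<subseteq> {complex_of_real t0, complex_of_real x} \<union> - \<real>"
      by (rule real_points_joinable_off_real_axis)
    have "path_image \<sigma> \<subseteq> D"
      using \<sigma>(4) x t0 D(4) by blast
    moreover have "\<sigma> 0 \<in> U"
      using t0 \<sigma>(2) by simp
    ultimately obtain r where "cont_along f U \<sigma> (\<lambda>_. F) r"
      using cont_along_single_element[OF D(1-3) \<sigma>(1) _ \<open>open U\<close>] agree \<sigma>(2) by auto
    moreover have "F (\<sigma> 1) \<in> dmap ` N_set"
    proof (rule M_set_real_point_in_dN)
      show "F (\<sigma> 1) \<in> M_set" "F (\<sigma> 1) \<in> range dmap"
        using D(3) real[OF x] x \<sigma>(3) by auto
    qed
    ultimately show ?thesis
      unfolding real_points_over_dN_def using \<sigma>(3)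
      by (intro CollectI exI[of _ \<sigma>] exI[of _ "\<lambda>_. F"] exI[of _ r] conjI) simp_all
  qed
  then have "UNIV - real_points_over_dN f U \<subseteq> {x. complex_of_real x \<notin> D}"
    by blast
  then show "discrete (UNIV - real_points_over_dN f U)"
    using poles discrete_subset by blast
qed

section \<open>The Riccati equation\<close>

text \<open>The condition \<open>P z ^ 2 + c ^ 2 \<noteq> 0\<close> says exactly that \<open>(P z, c)\<close> and \<open>(c, P z)\<close> lie
  in \<open>M\<close>.\<close>

definition off_axis_extension ::
  "real set \<Rightarrow> (real \<Rightarrow> real) \<Rightarrow> real \<Rightarrow> complex set \<Rightarrow> (complex \<Rightarrow> complex) \<Rightarrow> bool" where
  "off_axis_extension I p c D P \<longleftrightarrow> open D \<and> P holomorphic_on D \<and>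
     - \<real> \<subseteq> D \<and> complex_of_real ` I \<subseteq> D \<and> discrete {x. complex_of_real x \<notin> D} \<and>
     (\<forall>z\<in>D. P z ^ 2 + complex_of_real c ^ 2 \<noteq> 0) \<and> (\<forall>x. P (complex_of_real x) \<in> \<real>) \<and>
     (\<forall>t\<in>I. P (complex_of_real t) = complex_of_real (p t))"

lemma uniform_discrete_cos_affine_zeros:
  fixes k \<beta> :: real
  assumes "k \<noteq> 0"
  shows "uniform_discrete {x. cos (k * x + \<beta>) = 0}"
proof (rule uniformI1)
  show "pi / \<bar>k\<bar> > 0"
    using assms by simp
  fix x y assume "x \<in> {x. cos (k * x + \<beta>) = 0}" "y \<in> {x. cos (k * x + \<beta>) = 0}"
    and "dist x y < pi / \<bar>k\<bar>"
  then obtain n m :: int where "k * x + \<beta> = n * pi + pi / 2" "k * y + \<beta> = m * pi + pi / 2"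
    by (auto simp: cos_zero_iff_int2)
  then have diff: "k * (x - y) = real_of_int (n - m) * pi"
    by (simp add: algebra_simps)
  then have "\<bar>k * (x - y)\<bar> = \<bar>real_of_int (n - m)\<bar> * pi"
    by (simp add: abs_mult)
  moreover have "\<bar>k * (x - y)\<bar> < pi"
    using \<open>dist x y < pi / \<bar>k\<bar>\<close> assms unfolding abs_mult dist_real_def
    by (simp add: field_simps)
  ultimately have "n = m"
    by simp
  with diff assms show "x = y"
    by simp
qed

lemma riccati_tan_solution:
  fixes p :: "real \<Rightarrow> real"
  assumes "convex I" "c \<noteq> 0"
    and p: "\<And>t. t \<in> I \<Longrightarrow> (p has_real_derivative a * (p t ^ 2 + c ^ 2)) (at t)"
  obtains \<beta> where "\<And>t. t \<in> I \<Longrightarrow> cos (a * c * t + \<beta>) \<noteq> 0"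
    "\<And>t. t \<in> I \<Longrightarrow> p t = c * tan (a * c * t + \<beta>)"
proof -
  have "((\<lambda>t. arctan (p t / c) - a * c * t) has_real_derivative 0) (at t within I)" if "t \<in> I" for t
  proof -
    have "((\<lambda>t. arctan (p t / c) - a * c * t) has_real_derivative
        inverse (1 + (p t / c)\<^sup>2) * (a * (p t ^ 2 + c ^ 2) / c) - a * c) (at t)"
      using p[OF that] \<open>c \<noteq> 0\<close> by (auto intro!: derivative_eq_intros)
    moreover have "1 + (p t / c)\<^sup>2 = (p t ^ 2 + c ^ 2) / c ^ 2"
      using \<open>c \<noteq> 0\<close> by (simp add: field_simps)
    moreover have "p t ^ 2 + c ^ 2 \<noteq> 0"
      using \<open>c \<noteq> 0\<close> by (simp add: add_nonneg_pos)
    ultimately have "((\<lambda>t. arctan (p t / c) - a * c * t) has_real_derivative 0) (at t)"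
      using \<open>c \<noteq> 0\<close> by (simp add: power2_eq_square)
    then show ?thesis
      by (rule has_field_derivative_at_within)
  qed
  from has_field_derivative_zero_constant[OF \<open>convex I\<close> this]
  obtain \<beta> where "\<And>t. t \<in> I \<Longrightarrow> arctan (p t / c) - a * c * t = \<beta>"
    by blast
  then have \<beta>: "arctan (p t / c) = a * c * t + \<beta>" if "t \<in> I" for t
    using that by force
  show thesis
  proof (rule that)
    fix t assume "t \<in> I"
    show "cos (a * c * t + \<beta>) \<noteq> 0"
      using cos_arctan_not_zero[of "p t / c"] \<beta>[OF \<open>t \<in> I\<close>] by simp
    show "p t = c * tan (a * c * t + \<beta>)"
      using tan_arctan[of "p t / c"] \<beta>[OF \<open>t \<in> I\<close>] \<open>c \<noteq> 0\<close> by simp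
  qed
qed

lemma cos_affine_eq_0_imp_Reals:
  fixes k \<beta> :: real
  assumes "k \<noteq> 0" "cos (complex_of_real k * z + complex_of_real \<beta>) = 0"
  shows "z \<in> \<real>"
proof -
  obtain n :: int where
    "complex_of_real k * z + complex_of_real \<beta> = complex_of_real (n * pi) + complex_of_real pi / 2"
    using assms(2) cos_eq_0 by blast
  then have "complex_of_real k * z + complex_of_real \<beta> = complex_of_real (n * pi + pi / 2)"
    by simp
  then have "complex_of_real k * z = complex_of_real (n * pi + pi / 2 - \<beta>)"
    unfolding of_real_diff by (simp add: eq_diff_eq)
  with assms(1) have "z = complex_of_real (n * pi + pi / 2 - \<beta>) / complex_of_real k"
    by (simp add: eq_divide_eq mult.commute)
  then show ?thesis
    by simp
qed

lemma tan_off_axis_extension: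
  fixes k \<beta> c :: real
  assumes "I \<noteq> {}" "c \<noteq> 0"
    and cos_I: "\<And>t. t \<in> I \<Longrightarrow> cos (k * t + \<beta>) \<noteq> 0"
    and p: "\<And>t. t \<in> I \<Longrightarrow> p t = c * tan (k * t + \<beta>)"
  shows "\<exists>D P. off_axis_extension I p c D P"
proof -
  define w where "w z = complex_of_real k * z + complex_of_real \<beta>" for z
  have w_real: "w (complex_of_real x) = complex_of_real (k * x + \<beta>)" for x
    by (simp add: w_def)
  have cos_w_real: "cos (w (complex_of_real x)) = complex_of_real (cos (k * x + \<beta>))" for x
    by (simp only: w_real cos_of_real)
  have zeros_real: "k \<noteq> 0 \<and> z \<in> \<real>" if "cos (w z) = 0" for z
  proof -
    have "k \<noteq> 0"
    proof
      assume "k = 0"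
      obtain t where "t \<in> I"
        using \<open>I \<noteq> {}\<close> by blast
      have "cos (w z) = cos (w (complex_of_real t))"
        using \<open>k = 0\<close> by (simp add: w_def)
      then show False
        using that cos_I[OF \<open>t \<in> I\<close>] by (simp add: cos_w_real)
    qed
    with that show ?thesis
      unfolding w_def by (blast intro: cos_affine_eq_0_imp_Reals)
  qed
  define D where "D = {z. cos (w z) \<noteq> 0}"
  define P where "P z = complex_of_real c * tan (w z)" for z
  have "open D"
    unfolding D_def w_def by (intro open_Collect_neq continuous_intros)
  moreover have "P holomorphic_on D"
    unfolding P_def D_def w_def tan_def by (auto intro!: holomorphic_intros)
  moreover have "- \<real> \<subseteq> D"
    using zeros_real by (auto simp: D_def)
  moreover have "complex_of_real ` I \<subseteq> D"
    using cos_I by (auto simp: D_def cos_w_real)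
  moreover have "discrete {x. complex_of_real x \<notin> D}"
  proof (cases "k = 0")
    case True
    then have "cos (w z) \<noteq> 0" for z
      using zeros_real by blast
    then show ?thesis
      by (simp add: D_def)
  next
    case False
    then show ?thesis
      using uniform_discrete_cos_affine_zeros[OF False, of \<beta>]
      by (auto simp: D_def cos_w_real intro: uniform_discrete_imp_discrete)
  qed
  moreover have "P z ^ 2 + complex_of_real c ^ 2 \<noteq> 0" if "z \<in> D" for z
  proof -
    have "P z ^ 2 + complex_of_real c ^ 2 = complex_of_real c ^ 2 / cos (w z) ^ 2"
      using that by (simp add: P_def D_def tan_def field_simps sin_squared_eq)
    then show ?thesis
      using that \<open>c \<noteq> 0\<close> by (simp add: D_def)
  qed
  moreover have "P (complex_of_real x) = complex_of_real (c * tan (k * x + \<beta>))" for x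
    by (simp only: P_def w_real of_real_mult tan_of_real)
  ultimately show ?thesis
    unfolding off_axis_extension_def using p by (intro exI[of _ D] exI[of _ P]) auto
qed

lemma riccati_reciprocal_solution:
  fixes p :: "real \<Rightarrow> real"
  assumes "convex I"
    and p: "\<And>t. t \<in> I \<Longrightarrow> (p has_real_derivative a * p t ^ 2) (at t)"
    and nz: "\<And>t. t \<in> I \<Longrightarrow> p t \<noteq> 0"
  obtains \<beta> where "\<And>t. t \<in> I \<Longrightarrow> \<beta> - a * t \<noteq> 0" "\<And>t. t \<in> I \<Longrightarrow> p t = 1 / (\<beta> - a * t)"
proof -
  have "((\<lambda>t. inverse (p t) + a * t) has_real_derivative 0) (at t within I)" if "t \<in> I" for t
  proof -
    have "((\<lambda>t. inverse (p t) + a * t) has_real_derivative 0) (at t)"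
      using p[OF that] nz[OF that]
      by (auto intro!: derivative_eq_intros simp: power2_eq_square field_simps)
    then show ?thesis
      by (rule has_field_derivative_at_within)
  qed
  from has_field_derivative_zero_constant[OF \<open>convex I\<close> this]
  obtain \<beta> where "\<And>t. t \<in> I \<Longrightarrow> inverse (p t) + a * t = \<beta>"
    by blast
  then have \<beta>: "\<beta> - a * t = inverse (p t)" if "t \<in> I" for t
    using that by force
  show thesis
  proof (rule that)
    fix t assume "t \<in> I"
    show "\<beta> - a * t \<noteq> 0"
      using \<beta>[OF \<open>t \<in> I\<close>] nz[OF \<open>t \<in> I\<close>] by simp
    show "p t = 1 / (\<beta> - a * t)"
      using \<beta>[OF \<open>t \<in> I\<close>] by (simp add: divide_inverse)
  qed
qed

lemma reciprocal_off_axis_extension: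
  fixes a \<beta> :: real
  assumes "I \<noteq> {}"
    and nz_I: "\<And>t. t \<in> I \<Longrightarrow> \<beta> - a * t \<noteq> 0"
    and p: "\<And>t. t \<in> I \<Longrightarrow> p t = 1 / (\<beta> - a * t)"
  shows "\<exists>D P. off_axis_extension I p 0 D P"
proof -
  define q where "q z = complex_of_real \<beta> - complex_of_real a * z" for z
  have q_real: "q (complex_of_real x) = complex_of_real (\<beta> - a * x)" for x
    by (simp add: q_def)
  have q_real_eq_0: "q (complex_of_real x) = 0 \<longleftrightarrow> \<beta> - a * x = 0" for x
    by (simp only: q_real of_real_eq_0_iff)
  have zeros_real: "a \<noteq> 0 \<and> z \<in> \<real>" if "q z = 0" for z
  proof -
    obtain t where "t \<in> I"
      using \<open>I \<noteq> {}\<close> by blast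
    have "a \<noteq> 0"
      using \<open>q z = 0\<close> nz_I[OF \<open>t \<in> I\<close>] by (auto simp: q_def)
    moreover have "z = complex_of_real \<beta> / complex_of_real a"
      using \<open>q z = 0\<close> \<open>a \<noteq> 0\<close> by (simp add: q_def eq_divide_eq)
    ultimately show ?thesis
      by simp
  qed
  define D where "D = {z. q z \<noteq> 0}"
  define P where "P z = 1 / q z" for z
  have "open D"
    unfolding D_def q_def by (intro open_Collect_neq continuous_intros)
  moreover have "P holomorphic_on D"
    unfolding P_def D_def q_def by (auto intro!: holomorphic_intros)
  moreover have "- \<real> \<subseteq> D"
    using zeros_real by (auto simp: D_def)
  moreover have "complex_of_real ` I \<subseteq> D"
    using nz_I by (auto simp: D_def q_real_eq_0)
  moreover have "discrete {x. complex_of_real x \<notin> D}"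
  proof -
    have "x = \<beta> / a" if "complex_of_real x \<notin> D" for x
    proof -
      have "q (complex_of_real x) = 0"
        using that by (simp add: D_def)
      then have "a \<noteq> 0" "\<beta> - a * x = 0"
        using zeros_real q_real_eq_0 by blast+
      then show ?thesis
        by (simp add: field_simps)
    qed
    then have "{x. complex_of_real x \<notin> D} \<subseteq> {\<beta> / a}"
      by blast
    then show ?thesis
      using discrete_compact_finite_iff finite_subset by blast
  qed
  moreover have "P z ^ 2 + complex_of_real 0 ^ 2 \<noteq> 0" if "z \<in> D" for z
    using that by (simp add: D_def P_def)
  moreover have P_real: "P (complex_of_real x) = complex_of_real (1 / (\<beta> - a * x))" for x
    by (simp only: P_def q_real of_real_divide of_real_1)
  moreover have "P (complex_of_real x) \<in> \<real>" for x
    unfolding P_real by (rule Reals_of_real)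
  moreover have "P (complex_of_real t) = complex_of_real (p t)" if "t \<in> I" for t
    unfolding P_real p[OF that] ..
  ultimately show ?thesis
    unfolding off_axis_extension_def by blast
qed

lemma riccati_off_axis_extension:
  fixes p :: "real \<Rightarrow> real"
  assumes "convex I" "I \<noteq> {}"
    and p: "\<And>t. t \<in> I \<Longrightarrow> (p has_real_derivative a * (p t ^ 2 + c ^ 2)) (at t)"
    and nz: "\<And>t. t \<in> I \<Longrightarrow> p t ^ 2 + c ^ 2 \<noteq> 0"
  obtains D P where "off_axis_extension I p c D P"
proof (cases "c = 0")
  case True
  then obtain \<beta> where "\<And>t. t \<in> I \<Longrightarrow> \<beta> - a * t \<noteq> 0" "\<And>t. t \<in> I \<Longrightarrow> p t = 1 / (\<beta> - a * t)"
    using riccati_reciprocal_solution[OF \<open>convex I\<close>, of p a] p nz by auto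
  with \<open>I \<noteq> {}\<close> have "\<exists>D P. off_axis_extension I p 0 D P"
    by (intro reciprocal_off_axis_extension)
  with True that show thesis
    by blast
next
  case False
  then obtain \<beta> where "\<And>t. t \<in> I \<Longrightarrow> cos (a * c * t + \<beta>) \<noteq> 0"
    "\<And>t. t \<in> I \<Longrightarrow> p t = c * tan (a * c * t + \<beta>)"
    using riccati_tan_solution[OF \<open>convex I\<close> False p] by blast
  with \<open>I \<noteq> {}\<close> False have "\<exists>D P. off_axis_extension I p c D P"
    by (intro tan_off_axis_extension)
  with that show thesis
    by blast
qed

lemma Reals_pair_in_range_dmap:
  assumes "z \<in> \<real>" "w \<in> \<real>"
  shows "(z, w) \<in> range dmap"
proof -
  obtain x y where "z = complex_of_real x" "w = complex_of_real y"
    using assms by (auto elim!: Reals_cases)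
  then have "(z, w) = dmap (x, y)"
    by (simp add: dmap_def)
  then show ?thesis
    by blast
qed

lemma complete_curve_of_off_axis_extension:
  assumes I: "is_interval I" "open I" "I \<noteq> {}"
    and ext: "off_axis_extension I p c D P"
    and \<gamma>: "(\<forall>t\<in>I. \<gamma> t = (p t, c)) \<or> (\<forall>t\<in>I. \<gamma> t = (c, p t))"
  shows "complete_curve I \<gamma>"
proof -
  have D: "open D" "- \<real> \<subseteq> D" "complex_of_real ` I \<subseteq> D" "discrete {x. complex_of_real x \<notin> D}"
    and holo: "P holomorphic_on D"
    and M: "\<And>z. z \<in> D \<Longrightarrow> P z ^ 2 + complex_of_real c ^ 2 \<noteq> 0"
    and real: "\<And>x. (P (complex_of_real x), complex_of_real c) \<in> range dmap"
      "\<And>x. (complex_of_real c, P (complex_of_real x)) \<in> range dmap"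
    and Pp: "\<And>t. t \<in> I \<Longrightarrow> P (complex_of_real t) = complex_of_real (p t)"
    using ext by (simp_all add: off_axis_extension_def Reals_pair_in_range_dmap)
  have const: "(\<lambda>z. complex_of_real c) holomorphic_on D"
    by simp
  from \<gamma> show ?thesis
  proof
    assume "\<forall>t\<in>I. \<gamma> t = (p t, c)"
    with Pp have "\<And>t. t \<in> I \<Longrightarrow> (P (complex_of_real t), complex_of_real c) = dmap (\<gamma> t)"
      by (simp add: dmap_def)
    moreover have "(\<lambda>z. (P z, complex_of_real c)) ` D \<subseteq> M_set"
      using M by (auto simp: mem_M_set_iff)
    ultimately show ?thesis
      using holo const real(1)
      by (intro complete_curveI[OF I D(1) _ _ D(2,3) _ D(4)]) (simp_all add: holo2_def)
  next
    assume "\<forall>t\<in>I. \<gamma> t = (c, p t)"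
    with Pp have "\<And>t. t \<in> I \<Longrightarrow> (complex_of_real c, P (complex_of_real t)) = dmap (\<gamma> t)"
      by (simp add: dmap_def)
    moreover have "(\<lambda>z. (complex_of_real c, P z)) ` D \<subseteq> M_set"
      using M by (auto simp: mem_M_set_iff add.commute)
    ultimately show ?thesis
      using holo const real(2)
      by (intro complete_curveI[OF I D(1) _ _ D(2,3) _ D(4)]) (simp_all add: holo2_def)
  qed
qed

theorem mainTheorem2:
  fixes I :: "real set" and \<gamma> :: "real \<Rightarrow> real \<times> real"
  assumes "is_null_geodesic I \<gamma>"
  shows "complete_curve I \<gamma>"
proof -
  have I: "is_interval I" "open I" "I \<noteq> {}"
    using assms by (simp_all add: is_null_geodesic_def is_geodesic_def)
  obtain p a c where
    p: "\<And>t. t \<in> I \<Longrightarrow> (p has_real_derivative a * (p t ^ 2 + c ^ 2)) (at t)" and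
    nz: "\<And>t. t \<in> I \<Longrightarrow> p t ^ 2 + c ^ 2 \<noteq> 0" and
    shape: "(\<forall>t\<in>I. \<gamma> t = (p t, c)) \<or> (\<forall>t\<in>I. \<gamma> t = (c, p t))"
    using null_geodesic_riccati[OF assms] by blast
  obtain D P where "off_axis_extension I p c D P"
    using riccati_off_axis_extension[OF is_interval_convex[OF I(1)] I(3) p nz] by blast
  then show ?thesis
    using complete_curve_of_off_axis_extension[OF I _ shape] by blast
qed

end
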